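(* Let $A \in \mathbb{C}^{m\times n}$, let $k$ be an integer with $1 \le k \le \min\{m,n\}$, and let $s,t$ be integers with $0 \le s < k$, $t \ge 1$ and $s+t \le n$. Let $Q \in \mathbb{C}^{m\times m}$ be unitary and $\Pi$ an $n\times n$ permutation matrix such that $R^{(0)} := Q^*A\Pi$ has $\mathrm{GB}(s)$ form. For $s < j \le s+t$ write $\gamma(j) = \|R^{(0)}((s+1):m,\, j)\|_2^2$, and let $\mu = \max_{s+t<j\le n}\|A\Pi(:,j)\|_2^2$ (with $\mu=0$ if $s+t=n$). Assume $$\max_{s<j\le s+t}\gamma(j) \;\ge\; \mu .$$ Let $b$ be an integer with $1 \le b \le t$, and let $\sigma$ be a permutation of $\{1,\dots,t\}$ such that $\gamma(s+\sigma(1)) \ge \gamma(s+\sigma(2)) \ge \dots \ge \gamma(s+\sigma(t))$. Call the indices $s+\sigma(1),\dots,s+\sigma(b)$ the candidates, and let $\delta = \max\{\gamma(j) : j \in \{s+1,\dots,s+t\} \text{ not a candidate}\}$ (with $\delta = 0$ if $b=t$). Let $B = R^{(0)}((s+1):m,\; [s+\sigma(1),\dots,s+\sigma(b)]) \in \mathbb{C}^{(m-s)\times b}$, let $d=\min\{m-s,\,b\}$, and apply $d$ steps of the Golub–Businger algorithm to $B$, producing a permutation matrix $\widehat{P}$ of size $b$, Householder reflections $H_1,\dots,H_d \in \mathbb{C}^{(m-s)\times(m-s)}$ and $\widehat{R} = H_d\cdots H_1 B \widehat{P}$. Let $$c = \max\{\, i \in \{1,\dots,d\} : |\widehat{R}(i,i)|^2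 \ge \max(\delta,\mu) \,\}.$$ Let $\widehat{\Pi}$ be an $n\times n$ permutation matrix which fixes every column position outside $\{s+1,\dots,s+t\}$, places the candidate columns of $R^{(0)}$ (i.e. the columns of $R^{(0)}$ whose restrictions to rows $(s+1):m$ are the columns of $B$) into positions $s+1,\dots,s+b$ in the order given by $B\widehat{P}$ (so that $R^{(0)}\widehat{\Pi}((s+1):m,\,(s+1):(s+b)) = B\widehat{P}$), and places the remaining non-candidate indices of $\{s+1,\dots,s+t\}$ into positions $s+b+1,\dots,s+t$ in some order. Let $$\widehat{Q} = \begin{bmatrix} I_{s\times s} & 0 \\ 0 & H_1H_2\cdots H_c\end{bmatrix}.$$ Then $(Q\widehat{Q})^*A(\Pi\widehat{\Pi})$ has $\mathrm{GB}(s+c)$ form.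
   Context: A matrix $R \in \mathbb{C}^{m\times n}$ is said to have $\mathrm{GB}(k)$ form (for $0\le k\le\min\{m,n\}$) if its first $k$ columns are upper-triangular and $|R(i,i)| = \max_{i\le j\le n}\|R(i:m,\,j)\|_2$ for $1\le i\le k$; every matrix is in $\mathrm{GB}(0)$ form. Notation $R(i:m, j)$ denotes entries $i,\dots,m$ of column $j$; $A(:,j)$ is the $j$-th column. A Householder reflection at step $i$ on $\mathbb{C}^{p}$ is a unitary matrix $I - \tau vv^*$ with real $\tau\ge 0$, $v(1)=\dots=v(i-1)=0$, $v(i)=1$, which maps a given vector $x$ to $[x(1),\dots,x(i-1),\mu',0,\dots,0]$ with $|\mu'| = \|x(i:p)\|_2$. The Golub–Businger algorithm applied to $B\in\mathbb{C}^{p\times b}$ for $d\le\min\{p,b\}$ steps: set $R\leftarrow B$; for $i=1,\dots,d$, pick $j_{\max}\in\arg\max_{j\ge i}\|R(i:p,j)\|_2$, swap columns $i$ and $j_{\max}$ of $R$ (recording the swap in the permutation $\widehat{P}$), compute the Householder reflection $H_i$ at step $i$ zeroing entries $(i+1):p$ of column $i$, and set $R\leftarrow H_iR$. The output $\widehat R$ is the final $R$, which equals $H_d\cdots H_1 B\widehat P$. *)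

theory Defs
  imports "Jordan_Normal_Form.Matrix" "HOL-Combinatorics.Transposition" "HOL-Combinatorics.Permutations"
begin

(* All indices are 0-based: row/column i here corresponds to i+1 in the paper. *)

definition ctrans :: "complex mat \<Rightarrow> complex mat" where
  "ctrans A = mat (dim_col A) (dim_row A) (\<lambda>(i,j). cnj (A $$ (j,i)))"

definition unitary_mat :: "nat \<Rightarrow> complex mat \<Rightarrow> bool" where
  "unitary_mat p U \<longleftrightarrow> U \<in> carrier_mat p p \<and> ctrans U * U = 1\<^sub>m p"

(* permutation matrix of a permutation f of {0..<n}: column j has its 1 in row f j,
   so (A * perm_mat n f) has column j equal to column f j of A *)
definition perm_mat :: "nat \<Rightarrow> (nat \<Rightarrow> nat) \<Rightarrow> complex mat" where
  "perm_mat n f = mat n n (\<lambda>(i,j). if i = f j then 1 else 0)"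

definition is_perm_mat :: "nat \<Rightarrow> complex mat \<Rightarrow> bool" where
  "is_perm_mat n P \<longleftrightarrow> (\<exists>f. f permutes {..<n} \<and> P = perm_mat n f)"

definition subcol_norm :: "complex mat \<Rightarrow> nat \<Rightarrow> nat \<Rightarrow> real" where
  "subcol_norm R i j = sqrt (\<Sum>r\<in>{i..<dim_row R}. (cmod (R $$ (r,j)))\<^sup>2)"

definition GB_form :: "nat \<Rightarrow> complex mat \<Rightarrow> bool" where
  "GB_form k R \<longleftrightarrow> k \<le> min (dim_row R) (dim_col R) \<and>
     (\<forall>j<k. \<forall>i. j < i \<and> i < dim_row R \<longrightarrow> R $$ (i,j) = 0) \<and>
     (\<forall>i<k. cmod (R $$ (i,i)) = Max ((\<lambda>j. subcol_norm R i j) ` {i..<dim_col R}))"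

definition householder :: "nat \<Rightarrow> nat \<Rightarrow> complex vec \<Rightarrow> complex mat \<Rightarrow> bool" where
  "householder p i x H \<longleftrightarrow> unitary_mat p H \<and>
     (\<exists>\<tau> v. \<tau> \<ge> 0 \<and> v \<in> carrier_vec p \<and> (\<forall>l<i. v $ l = 0) \<and> v $ i = 1 \<and>
        H = mat p p (\<lambda>(a,b). (if a = b then 1 else 0) - complex_of_real \<tau> * v $ a * cnj (v $ b))) \<and>
     (\<forall>l<i. (H *\<^sub>v x) $ l = x $ l) \<and>
     (\<forall>l. i < l \<and> l < p \<longrightarrow> (H *\<^sub>v x) $ l = 0) \<and>
     cmod ((H *\<^sub>v x) $ i) = sqrt (\<Sum>l\<in>{i..<p}. (cmod (x $ l))\<^sup>2)"

definition swap_cols :: "complex mat \<Rightarrow> nat \<Rightarrow> nat \<Rightarrow> complex mat" where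
  "swap_cols R i j = mat (dim_row R) (dim_col R) (\<lambda>(a,c). R $$ (a, Transposition.transpose i j c))"

(* gb_run B i f Hs R : after i steps of Golub-Businger on B (p x b) with some admissible
   choices, the current matrix is R, the Householder reflections are Hs = [H_1,...,H_i]
   and the accumulated column permutation is perm_mat b f (R = H_i...H_1 B perm_mat b f). *)
inductive gb_run :: "complex mat \<Rightarrow> nat \<Rightarrow> (nat \<Rightarrow> nat) \<Rightarrow> complex mat list \<Rightarrow> complex mat \<Rightarrow> bool"
  for B :: "complex mat" where
  gb_init: "gb_run B 0 id [] B"
| gb_step: "\<lbrakk> gb_run B i f Hs R; i < min (dim_row B) (dim_col B);
     i \<le> jmax; jmax < dim_col B;
     \<forall>j. i \<le> j \<and> j < dim_col B \<longrightarrow> subcol_norm R i j \<le> subcol_norm R i jmax;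
     householder (dim_row B) i (col (swap_cols R i jmax) i) H \<rbrakk>
   \<Longrightarrow> gb_run B (Suc i) (f \<circ> Transposition.transpose i jmax) (Hs @ [H]) (H * swap_cols R i jmax)"

definition blockdiag_id :: "nat \<Rightarrow> complex mat \<Rightarrow> complex mat" where
  "blockdiag_id s M = mat (s + dim_row M) (s + dim_col M)
     (\<lambda>(a,c). if a < s \<and> c < s then (if a = c then 1 else 0)
             else if s \<le> a \<and> s \<le> c then M $$ (a - s, c - s) else 0)"

end

(*
  Q-hat and Pi-hat leave the leading s rows and columns of R^(0) alone, and the unitary
  block H_1 ... H_c acting on rows s+1..m preserves every norm ||R(i:m, j)|| with i <= s,
  so the GB(s) form survives and everything reduces to the trailing block, i.e. to s = 0.
  There, stopping the Golub-Businger run after c steps but already applying its final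
  column permutation gives a matrix in GB(c) form (the later steps only permute columns
  beyond c) whose first c pivots are those of R-hat.  The other columns of the trailing
  block are the non-candidates, of norm at most delta inside the window and at most mu
  beyond it.  The pivots decrease, and c is the last step whose pivot is still at least
  max(delta, mu) -- a condition met by the first pivot, which is the largest column norm
  of the window -- so the first c pivots dominate all of these columns as well.
*)
theory Submission
  imports Defs "Jordan_Normal_Form.Determinant"
begin

lemma ctrans_dim [simp]: "dim_row (ctrans A) = dim_col A" "dim_col (ctrans A) = dim_row A"
  by (auto simp: ctrans_def)

lemma ctrans_carrier_mat [simp]: "A \<in> carrier_mat n m \<Longrightarrow> ctrans A \<in> carrier_mat m n"
  by (intro carrier_matI) auto

lemma index_ctrans [simp]: "i < dim_col A \<Longrightarrow> j < dim_row A \<Longrightarrow> ctrans A $$ (i,j) = cnj (A $$ (j,i))"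
  by (auto simp: ctrans_def)

lemma ctrans_mult:
  assumes "A \<in> carrier_mat n k" "B \<in> carrier_mat k m"
  shows "ctrans (A * B) = ctrans B * ctrans A"
proof (rule eq_matI)
  fix i j assume "i < dim_row (ctrans B * ctrans A)" "j < dim_col (ctrans B * ctrans A)"
  then show "ctrans (A * B) $$ (i, j) = (ctrans B * ctrans A) $$ (i, j)"
    using assms by (simp add: scalar_prod_def, intro sum.cong) (auto simp: mult.commute)
qed (use assms in auto)

lemma ctrans_one [simp]: "ctrans (1\<^sub>m n) = 1\<^sub>m n"
  by (rule eq_matI) auto

lemma ctrans_ctrans [simp]: "ctrans (ctrans A) = A"
  by (rule eq_matI) auto

lemma unitary_mat_ctrans:
  assumes "unitary_mat p U"
  shows "unitary_mat p (ctrans U)"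
  using assms mat_mult_left_right_inverse[of "ctrans U" p U]
  by (auto simp: unitary_mat_def)

lemma unitary_mat_mult:
  assumes U: "unitary_mat p U" and V: "unitary_mat p V"
  shows "unitary_mat p (U * V)"
proof -
  have Uc: "U \<in> carrier_mat p p" and Vc: "V \<in> carrier_mat p p"
    using U V by (auto simp: unitary_mat_def)
  have "ctrans (U * V) * (U * V) = ctrans V * ((ctrans U * U) * V)"
    using Uc Vc by (simp add: ctrans_mult[OF Uc Vc] assoc_mult_mat[of _ p p _ p _ p])
  also have "\<dots> = 1\<^sub>m p"
    using U V Vc by (simp add: unitary_mat_def)
  finally show ?thesis
    using Uc Vc by (simp add: unitary_mat_def)
qed

lemma foldr_mult_carrier:
  fixes Hs :: "complex mat list"
  shows "\<forall>H\<in>set Hs. H \<in> carrier_mat p p \<Longrightarrow> foldr (*) Hs (1\<^sub>m p) \<in> carrier_mat p p"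
  by (induction Hs) auto

lemma foldr_mult_snoc:
  fixes Hs :: "complex mat list"
  assumes "\<forall>G\<in>set Hs. G \<in> carrier_mat p p" "H \<in> carrier_mat p p"
  shows "foldr (*) (Hs @ [H]) (1\<^sub>m p) = foldr (*) Hs (1\<^sub>m p) * H"
  using assms
proof (induction Hs)
  case (Cons G Hs)
  then show ?case
    using foldr_mult_carrier[of Hs p] by (simp add: assoc_mult_mat[of _ p p _ p _ p])
next
  case Nil
  then show ?case by simp
qed

lemma unitary_mat_foldr:
  assumes "\<forall>H\<in>set Hs. unitary_mat p H"
  shows "unitary_mat p (foldr (*) Hs (1\<^sub>m p))"
  using assms
proof (induction Hs)
  case Nil
  then show ?case by (simp add: unitary_mat_def)
qed (simp add: unitary_mat_mult)

lemma index_eq_col_index: "A \<in> carrier_mat p q \<Longrightarrow> r < p \<Longrightarrow> c < q \<Longrightarrow> A $$ (r,c) = col A c $ r"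
  by simp

subsection \<open>Norms of trailing parts of columns\<close>

definition tail_sqnorm :: "nat \<Rightarrow> complex vec \<Rightarrow> real" where
  "tail_sqnorm a y = (\<Sum>r\<in>{a..<dim_vec y}. (cmod (y $ r))\<^sup>2)"

lemma tail_sqnorm_split:
  "a \<le> a' \<Longrightarrow> a' \<le> dim_vec y \<Longrightarrow>
    tail_sqnorm a y = (\<Sum>r\<in>{a..<a'}. (cmod (y $ r))\<^sup>2) + tail_sqnorm a' y"
  unfolding tail_sqnorm_def by (simp add: sum.atLeastLessThan_concat)

lemma tail_sqnorm_eq_if_head_eq:
  assumes "dim_vec x = dim_vec y" "tail_sqnorm 0 x = tail_sqnorm 0 y"
    and "\<forall>r<a. r < dim_vec y \<longrightarrow> x $ r = y $ r"
  shows "tail_sqnorm a x = tail_sqnorm a y"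
proof (cases "a \<le> dim_vec y")
  case True
  have "(\<Sum>r\<in>{0..<a}. (cmod (x $ r))\<^sup>2) = (\<Sum>r\<in>{0..<a}. (cmod (y $ r))\<^sup>2)"
    using assms(3) True by (intro sum.cong) auto
  then show ?thesis
    using assms(1,2) True tail_sqnorm_split[of 0 a x] tail_sqnorm_split[of 0 a y] by simp
qed (use assms(1) in \<open>simp add: tail_sqnorm_def\<close>)

lemma subcol_norm_eq_tail_sqnorm:
  "j < dim_col M \<Longrightarrow> subcol_norm M a j = sqrt (tail_sqnorm a (col M j))"
  unfolding subcol_norm_def tail_sqnorm_def by (auto intro!: sum.cong)

lemma subcol_norm_antimono: "a \<le> a' \<Longrightarrow> subcol_norm M a' j \<le> subcol_norm M a j"
  unfolding subcol_norm_def by (auto intro!: sum_mono2)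

lemma subcol_norm_nonneg: "0 \<le> subcol_norm M a j"
  unfolding subcol_norm_def by (auto intro!: sum_nonneg)

lemma cmod_le_subcol_norm: "i < dim_row M \<Longrightarrow> cmod (M $$ (i,j)) \<le> subcol_norm M i j"
  unfolding subcol_norm_def
  by (rule real_le_rsqrt, rule member_le_sum[of i]) auto

definition cinner :: "complex vec \<Rightarrow> complex vec \<Rightarrow> complex" where
  "cinner x y = (\<Sum>i<dim_vec y. cnj (x $ i) * y $ i)"

lemma cinner_mult_mat_vec:
  assumes U: "U \<in> carrier_mat p q" and x: "x \<in> carrier_vec q" and y: "y \<in> carrier_vec p"
  shows "cinner (U *\<^sub>v x) y = cinner x (ctrans U *\<^sub>v y)"
proof -
  have "cinner (U *\<^sub>v x) y = (\<Sum>r<p. \<Sum>a<q. cnj (U $$ (r,a)) * cnj (x $ a) * y $ r)"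
    using U x y by (auto simp: cinner_def scalar_prod_def atLeast0LessThan sum_distrib_right
      intro!: sum.cong)
  also have "\<dots> = (\<Sum>a<q. cnj (x $ a) * (\<Sum>r<p. cnj (U $$ (r,a)) * y $ r))"
    by (subst sum.swap) (simp add: sum_distrib_left mult_ac)
  also have "\<dots> = cinner x (ctrans U *\<^sub>v y)"
    using U x y by (auto simp: cinner_def scalar_prod_def atLeast0LessThan intro!: sum.cong)
  finally show ?thesis .
qed

lemma cinner_self: "cinner x x = of_real (tail_sqnorm 0 x)"
  unfolding cinner_def tail_sqnorm_def of_real_sum atLeast0LessThan
  by (rule sum.cong) (simp, metis complex_norm_square mult.commute)

lemma unitary_tail_sqnorm:
  assumes U: "unitary_mat p U" and y: "y \<in> carrier_vec p"
  shows "tail_sqnorm 0 (U *\<^sub>v y) = tail_sqnorm 0 y"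
proof -
  have Uc: "U \<in> carrier_mat p p" and UU: "ctrans U * U = 1\<^sub>m p"
    using U by (auto simp: unitary_mat_def)
  have "cinner (U *\<^sub>v y) (U *\<^sub>v y) = cinner y (ctrans U *\<^sub>v (U *\<^sub>v y))"
    using Uc y by (intro cinner_mult_mat_vec) auto
  also have "ctrans U *\<^sub>v (U *\<^sub>v y) = y"
    using Uc UU y by (metis assoc_mult_mat_vec ctrans_carrier_mat one_mult_mat_vec)
  finally show ?thesis
    unfolding cinner_self of_real_eq_iff .
qed

lemma subcol_norm_unitary_mult:
  assumes G: "unitary_mat p G" and X: "X \<in> carrier_mat p q" and j: "j < q"
  shows "subcol_norm (G * X) 0 j = subcol_norm X 0 j"
proof -
  have Gc: "G \<in> carrier_mat p p"
    using G by (simp add: unitary_mat_def)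
  then show ?thesis
    using X j unitary_tail_sqnorm[OF G, of "col X j"] col_mult2[OF Gc X j]
      subcol_norm_eq_tail_sqnorm[of j "G * X" 0] subcol_norm_eq_tail_sqnorm[of j X 0]
    by simp
qed

lemma subcol_norm_unitary_mult_le:
  assumes "unitary_mat p G" "X \<in> carrier_mat p q" "j < q"
  shows "subcol_norm (G * X) a j \<le> subcol_norm X 0 j"
  using subcol_norm_antimono[of 0 a "G * X" j] subcol_norm_unitary_mult[OF assms] by simp

subsection \<open>Householder reflections\<close>

context
  fixes p i x H
  assumes H: "householder p i x H"
begin

lemma householder_carrier: "H \<in> carrier_mat p p"
  using H by (simp add: householder_def unitary_mat_def)

lemma householder_unitary: "unitary_mat p H"
  using H by (simp add: householder_def)

lemma householder_hermitian: "ctrans H = H"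
proof -
  obtain \<tau> v where Hv: "H = mat p p (\<lambda>(a,b). (if a = b then 1 else 0) - complex_of_real \<tau> * v $ a * cnj (v $ b))"
    using H unfolding householder_def by blast
  show ?thesis
    unfolding Hv by (intro eq_matI) (auto simp: mult.commute)
qed

lemma householder_mult_vec:
  assumes y: "y \<in> carrier_vec p"
  obtains v :: "complex vec" and \<alpha> where "\<forall>l<i. v $ l = 0"
    "\<forall>a<p. (H *\<^sub>v y) $ a = y $ a - \<alpha> * v $ a"
    "\<forall>r. i \<le> r \<and> r < p \<longrightarrow> y $ r = 0 \<Longrightarrow> \<alpha> = 0"
proof -
  obtain \<tau> v where v: "v \<in> carrier_vec p" "\<forall>l<i. v $ l = 0"
    and Hv: "H = mat p p (\<lambda>(a,b). (if a = b then 1 else 0) - complex_of_real \<tau> * v $ a * cnj (v $ b))"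
    using H unfolding householder_def by blast
  define \<alpha> where "\<alpha> = complex_of_real \<tau> * (\<Sum>b<p. cnj (v $ b) * y $ b)"
  have "(H *\<^sub>v y) $ a = y $ a - \<alpha> * v $ a" if a: "a < p" for a
  proof -
    have "(H *\<^sub>v y) $ a = (\<Sum>b<p. (if a = b then y $ b else 0) - complex_of_real \<tau> * v $ a * (cnj (v $ b) * y $ b))"
      using a y unfolding Hv by (auto simp: scalar_prod_def atLeast0LessThan algebra_simps intro!: sum.cong)
    also have "\<dots> = y $ a - \<alpha> * v $ a"
      using a by (simp add: sum_subtractf \<alpha>_def sum_distrib_left mult_ac)
    finally show ?thesis .
  qed
  moreover have "\<alpha> = 0" if vanish: "\<forall>r. i \<le> r \<and> r < p \<longrightarrow> y $ r = 0"
  proof -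
    have "cnj (v $ b) * y $ b = 0" if "b < p" for b
      using v(2) vanish that by (cases "b < i") auto
    then have "(\<Sum>b<p. cnj (v $ b) * y $ b) = 0"
      by (intro sum.neutral) auto
    then show ?thesis
      by (simp add: \<alpha>_def)
  qed
  ultimately show ?thesis
    using that[OF v(2)] by blast
qed

lemma householder_fixes_head:
  assumes y: "y \<in> carrier_vec p" and r: "r < i" "r < p"
  shows "(H *\<^sub>v y) $ r = y $ r"
proof -
  obtain v :: "complex vec" and \<alpha> where "\<forall>l<i. v $ l = 0" "\<forall>a<p. (H *\<^sub>v y) $ a = y $ a - \<alpha> * v $ a"
    using householder_mult_vec[OF y] by metis
  then show ?thesis
    using r by simp
qed

lemma householder_fixes_vanishing_tail:
  assumes y: "y \<in> carrier_vec p" and "\<forall>r. i \<le> r \<and> r < p \<longrightarrow> y $ r = 0"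
  shows "H *\<^sub>v y = y"
proof -
  obtain v :: "complex vec" and \<alpha> where "\<forall>a<p. (H *\<^sub>v y) $ a = y $ a - \<alpha> * v $ a" "\<alpha> = 0"
    using householder_mult_vec[OF y] assms(2) by metis
  then show ?thesis
    using y householder_carrier by (intro eq_vecI) auto
qed

lemma householder_tail_sqnorm:
  assumes y: "y \<in> carrier_vec p" and j: "j \<le> i"
  shows "tail_sqnorm j (H *\<^sub>v y) = tail_sqnorm j y"
proof (rule tail_sqnorm_eq_if_head_eq)
  show "dim_vec (H *\<^sub>v y) = dim_vec y"
    using householder_carrier y by simp
  show "tail_sqnorm 0 (H *\<^sub>v y) = tail_sqnorm 0 y"
    by (rule unitary_tail_sqnorm[OF householder_unitary y])
  show "\<forall>r<j. r < dim_vec y \<longrightarrow> (H *\<^sub>v y) $ r = y $ r"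
    using householder_fixes_head[OF y] j y by auto
qed

end

subsection \<open>The Golub--Businger form\<close>

lemma GB_formI:
  assumes "k \<le> min (dim_row R) (dim_col R)"
    and "\<And>j i. j < k \<Longrightarrow> j < i \<Longrightarrow> i < dim_row R \<Longrightarrow> R $$ (i,j) = 0"
    and "\<And>i j. i < k \<Longrightarrow> i \<le> j \<Longrightarrow> j < dim_col R \<Longrightarrow> subcol_norm R i j \<le> cmod (R $$ (i,i))"
  shows "GB_form k R"
  unfolding GB_form_def
proof (intro conjI allI impI)
  fix i assume i: "i < k"
  then have "cmod (R $$ (i,i)) \<le> subcol_norm R i i" "i < dim_col R"
    using assms(1) by (auto intro: cmod_le_subcol_norm)
  then show "cmod (R $$ (i,i)) = Max ((\<lambda>j. subcol_norm R i j) ` {i..<dim_col R})"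
    using assms(3)[OF i] by (intro antisym Max.boundedI Max_ge_iff[THEN iffD2]) force+
qed (use assms in auto)

lemma GB_form_dominates:
  assumes "GB_form k R" "i < k" "i \<le> j" "j < dim_col R"
  shows "subcol_norm R i j \<le> cmod (R $$ (i,i))"
  using assms unfolding GB_form_def by (auto intro: Max_ge)

lemma GB_form_below_diag:
  assumes "GB_form k R" "j < k" "j < i" "i < dim_row R"
  shows "R $$ (i,j) = 0"
  using assms unfolding GB_form_def by auto

lemma GB_form_extend_small_columns:
  assumes GB: "GB_form c X" and X: "X \<in> carrier_mat p b" and M: "M \<in> carrier_mat p q" and bq: "b \<le> q"
    and cols: "\<forall>l<b. col M l = col X l"
    and small: "\<forall>l\<in>{b..<q}. \<forall>i<c. subcol_norm M 0 l \<le> cmod (X $$ (i,i))"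
  shows "GB_form c M"
proof (rule GB_formI)
  have cp: "c \<le> p" "c \<le> b"
    using GB X by (auto simp: GB_form_def)
  have entry: "M $$ (i,l) = X $$ (i,l)" if "i < p" "l < b" for i l
  proof -
    have "M $$ (i,l) = col M l $ i"
      using M that bq by simp
    also have "\<dots> = X $$ (i,l)"
      using cols X that by simp
    finally show ?thesis .
  qed
  show "c \<le> min (dim_row M) (dim_col M)"
    using cp M bq by simp
  show "M $$ (i,j) = 0" if "j < c" "j < i" "i < dim_row M" for j i
    using that entry GB_form_below_diag[OF GB, of j i] cp M X by simp
  show "subcol_norm M i j \<le> cmod (M $$ (i,i))" if i: "i < c" and j: "i \<le> j" "j < dim_col M" for i j
  proof (cases "j < b")
    case True
    have "subcol_norm M i j = subcol_norm X i j"
      using cols True M X bq by (simp add: subcol_norm_eq_tail_sqnorm)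
    then show ?thesis
      using GB_form_dominates[OF GB i, of j] i j True X cp entry by simp
  next
    case False
    have "subcol_norm M i j \<le> subcol_norm M 0 j"
      by (rule subcol_norm_antimono) simp
    also have "\<dots> \<le> cmod (X $$ (i,i))"
      using small False i j M by simp
    finally show ?thesis
      using entry i cp by simp
  qed
qed

subsection \<open>Column permutations and block-diagonal updates\<close>

lemma perm_mat_dim [simp]: "dim_row (perm_mat n g) = n" "dim_col (perm_mat n g) = n"
  unfolding perm_mat_def by simp_all

lemma perm_mat_carrier [simp]: "perm_mat n g \<in> carrier_mat n n"
  by (intro carrier_matI) simp_all

lemma index_mult_perm_mat:
  assumes X: "X \<in> carrier_mat m n" and i: "i < m" and j: "j < n" "g j < n"
  shows "(X * perm_mat n g) $$ (i,j) = X $$ (i, g j)"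
proof -
  have "(X * perm_mat n g) $$ (i,j) = (\<Sum>k\<in>{0..<n}. X $$ (i,k) * (if k = g j then 1 else 0))"
    using X i j unfolding perm_mat_def by (auto simp: scalar_prod_def intro!: sum.cong)
  also have "\<dots> = (\<Sum>k\<in>{0..<n}. if k = g j then X $$ (i,k) else 0)"
    by (intro sum.cong) auto
  finally show ?thesis
    using j by simp
qed

lemma col_mult_perm_mat:
  assumes X: "X \<in> carrier_mat m n" and j: "j < n" "g j < n"
  shows "col (X * perm_mat n g) j = col X (g j)"
  using X j by (intro eq_vecI) (auto simp: index_mult_perm_mat simp del: index_mult_mat(1))

lemma subcol_norm_mult_perm_mat:
  assumes X: "X \<in> carrier_mat m n" and j: "j < n" "g j < n"
  shows "subcol_norm (X * perm_mat n g) a j = subcol_norm X a (g j)"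
  using X j by (simp add: subcol_norm_def index_mult_perm_mat del: index_mult_mat(1))

lemma GB_form_mult_perm_mat:
  assumes GB: "GB_form s X" and X: "X \<in> carrier_mat m n" and g: "g permutes {s..<n}"
  shows "GB_form s (X * perm_mat n g)"
proof (rule GB_formI)
  have g_lt: "g j < n" if "j < n" for j
    using permutes_in_image[OF g, of j] permutes_not_in[OF g, of j] that by (cases "s \<le> j") auto
  have g_fix: "g j = j" if "j < s" for j
    using g that by (simp add: permutes_not_in)
  show "s \<le> min (dim_row (X * perm_mat n g)) (dim_col (X * perm_mat n g))"
    using GB X by (simp add: GB_form_def)
  show "(X * perm_mat n g) $$ (i,j) = 0"
    if "j < s" "j < i" "i < dim_row (X * perm_mat n g)" for j i
    using that GB X g_fix g_lt by (simp add: GB_form_def index_mult_perm_mat del: index_mult_mat(1))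
  show "subcol_norm (X * perm_mat n g) i j \<le> cmod ((X * perm_mat n g) $$ (i,i))"
    if i: "i < s" and j: "i \<le> j" "j < dim_col (X * perm_mat n g)" for i j
  proof -
    have "{s..<n} \<subseteq> {i..<n}"
      using i by auto
    then have "g permutes {i..<n}"
      by (rule permutes_subset[OF g])
    then have "i \<le> g j"
      using j permutes_in_image[of g "{i..<n}" j] by simp
    moreover have "i < m" "i < n"
      using GB X i by (auto simp: GB_form_def)
    ultimately show ?thesis
      using GB_form_dominates[OF GB i] X j g_lt g_fix[OF i]
      by (simp add: subcol_norm_mult_perm_mat index_mult_perm_mat del: index_mult_mat(1))
  qed
qed

definition trailing_block :: "nat \<Rightarrow> complex mat \<Rightarrow> complex mat" where
  "trailing_block s M = mat (dim_row M - s) (dim_col M - s) (\<lambda>(i,j). M $$ (s + i, s + j))"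

lemma trailing_block_dim [simp]:
  "dim_row (trailing_block s M) = dim_row M - s" "dim_col (trailing_block s M) = dim_col M - s"
  by (simp_all add: trailing_block_def)

lemma index_trailing_block [simp]:
  "i < dim_row M - s \<Longrightarrow> j < dim_col M - s \<Longrightarrow> trailing_block s M $$ (i,j) = M $$ (s + i, s + j)"
  by (simp add: trailing_block_def)

lemma subcol_norm_trailing_block:
  assumes "s \<le> dim_row M" "j < dim_col M - s"
  shows "subcol_norm (trailing_block s M) a j = subcol_norm M (s + a) (s + j)"
proof -
  have "(\<Sum>r\<in>{a..<dim_row M - s}. (cmod (M $$ (s + r, s + j)))\<^sup>2)
      = (\<Sum>r\<in>{s + a..<dim_row M}. (cmod (M $$ (r, s + j)))\<^sup>2)"
    using assms(1) sum.shift_bounds_nat_ivl[of "\<lambda>r. (cmod (M $$ (r, s + j)))\<^sup>2" a s "dim_row M - s"]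
    by (simp add: add.commute)
  then show ?thesis
    using assms by (simp add: subcol_norm_def)
qed

lemma GB_form_append:
  assumes GBs: "GB_form s R" and GBc: "GB_form c (trailing_block s R)"
  shows "GB_form (s + c) R"
proof (rule GB_formI)
  have "s \<le> min (dim_row R) (dim_col R)" "c \<le> min (dim_row R - s) (dim_col R - s)"
    using GBs GBc by (simp_all add: GB_form_def)
  then show dims: "s + c \<le> min (dim_row R) (dim_col R)"
    by arith
  show "R $$ (i,j) = 0" if "j < s + c" "j < i" "i < dim_row R" for j i
  proof (cases "j < s")
    case True
    then show ?thesis
      using GB_form_below_diag[OF GBs] that by simp
  next
    case False
    then have "trailing_block s R $$ (i - s, j - s) = 0"
      using that dims by (intro GB_form_below_diag[OF GBc]) auto
    then show ?thesis
      using False that dims by simp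
  qed
  show "subcol_norm R i j \<le> cmod (R $$ (i,i))" if "i < s + c" "i \<le> j" "j < dim_col R" for i j
  proof (cases "i < s")
    case True
    then show ?thesis
      using GB_form_dominates[OF GBs] that by simp
  next
    case False
    then have "subcol_norm (trailing_block s R) (i - s) (j - s) \<le> cmod (trailing_block s R $$ (i - s, i - s))"
      using that dims by (intro GB_form_dominates[OF GBc]) auto
    then show ?thesis
      using False that dims by (simp add: subcol_norm_trailing_block)
  qed
qed

lemma trailing_block_mult_perm_mat:
  assumes X: "X \<in> carrier_mat m n" and g: "g permutes {s..<n}"
  shows "trailing_block s (X * perm_mat n g) = trailing_block s X * perm_mat (n - s) (\<lambda>l. g (s + l) - s)"
proof (rule eq_matI)
  fix i j assume i: "i < dim_row (trailing_block s X * perm_mat (n - s) (\<lambda>l. g (s + l) - s))"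
    and j: "j < dim_col (trailing_block s X * perm_mat (n - s) (\<lambda>l. g (s + l) - s))"
  have ij: "i < m - s" "j < n - s"
    using i j X by simp_all
  have "g (s + j) \<in> {s..<n}"
    using ij permutes_in_image[OF g, of "s + j"] by auto
  then have "g (s + j) - s < n - s" "s + (g (s + j) - s) = g (s + j)"
    by auto
  moreover have "trailing_block s X \<in> carrier_mat (m - s) (n - s)"
    using X by (intro carrier_matI) simp_all
  ultimately show "trailing_block s (X * perm_mat n g) $$ (i,j) = (trailing_block s X * perm_mat (n - s) (\<lambda>l. g (s + l) - s)) $$ (i,j)"
    using ij X index_mult_perm_mat[OF X, of "s + i" "s + j" g]
      index_mult_perm_mat[of "trailing_block s X" "m - s" "n - s" i j "\<lambda>l. g (s + l) - s"]
    by (simp del: index_mult_mat(1))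
qed (use X in simp_all)

lemma blockdiag_id_dim [simp]:
  "dim_row (blockdiag_id s M) = s + dim_row M" "dim_col (blockdiag_id s M) = s + dim_col M"
  by (simp_all add: blockdiag_id_def)

lemma blockdiag_id_carrier: "M \<in> carrier_mat p p \<Longrightarrow> blockdiag_id s M \<in> carrier_mat (s + p) (s + p)"
  by (intro carrier_matI) simp_all

lemma ctrans_blockdiag_id:
  "M \<in> carrier_mat p p \<Longrightarrow> ctrans (blockdiag_id s M) = blockdiag_id s (ctrans M)"
  unfolding blockdiag_id_def by (intro eq_matI) auto

lemma index_blockdiag_id_mult:
  assumes G: "G \<in> carrier_mat p p" and X: "X \<in> carrier_mat (s + p) n" and i: "i < s + p" and j: "j < n"
  shows "(blockdiag_id s G * X) $$ (i,j) =
    (if i < s then X $$ (i,j) else (G *\<^sub>v vec p (\<lambda>r. X $$ (s + r, j))) $ (i - s))"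
proof -
  define W where "W = blockdiag_id s G"
  have W: "W $$ (a,k) = (if a < s \<and> k < s then (if a = k then 1 else 0)
      else if s \<le> a \<and> s \<le> k then G $$ (a - s, k - s) else 0)" if "a < s + p" "k < s + p" for a k
    using G that unfolding W_def blockdiag_id_def by auto
  have "(W * X) $$ (i,j) = (\<Sum>k\<in>{0..<s}. W $$ (i,k) * X $$ (k,j)) + (\<Sum>k\<in>{s..<s + p}. W $$ (i,k) * X $$ (k,j))"
    using G X i j by (simp add: W_def scalar_prod_def sum.atLeastLessThan_concat)
  also have "(\<Sum>k\<in>{s..<s + p}. W $$ (i,k) * X $$ (k,j)) = (\<Sum>r\<in>{0..<p}. W $$ (i, s + r) * X $$ (s + r, j))"
    using sum.shift_bounds_nat_ivl[of "\<lambda>k. W $$ (i,k) * X $$ (k,j)" 0 s p] by (simp add: add.commute)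
  finally have split: "(W * X) $$ (i,j) = (\<Sum>k\<in>{0..<s}. W $$ (i,k) * X $$ (k,j))
      + (\<Sum>r\<in>{0..<p}. W $$ (i, s + r) * X $$ (s + r, j))" .
  show ?thesis
  proof (cases "i < s")
    case True
    have "(\<Sum>k\<in>{0..<s}. W $$ (i,k) * X $$ (k,j)) = (\<Sum>k\<in>{0..<s}. if k = i then X $$ (k,j) else 0)"
      using True i by (intro sum.cong) (auto simp: W)
    moreover have "(\<Sum>r\<in>{0..<p}. W $$ (i, s + r) * X $$ (s + r, j)) = 0"
      using True i by (intro sum.neutral) (auto simp: W)
    ultimately show ?thesis
      using split True by (simp add: W_def)
  next
    case False
    have "(\<Sum>k\<in>{0..<s}. W $$ (i,k) * X $$ (k,j)) = 0"
      using False i by (intro sum.neutral) (auto simp: W)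
    moreover have "(\<Sum>r\<in>{0..<p}. W $$ (i, s + r) * X $$ (s + r, j)) = (G *\<^sub>v vec p (\<lambda>r. X $$ (s + r, j))) $ (i - s)"
      using False i G by (auto simp: W scalar_prod_def intro!: sum.cong)
    ultimately show ?thesis
      using split False by (simp add: W_def)
  qed
qed

lemma unitary_blockdiag_id:
  assumes G: "unitary_mat p G"
  shows "unitary_mat (s + p) (blockdiag_id s G)"
proof -
  have Gc: "G \<in> carrier_mat p p" and GG: "ctrans G * G = 1\<^sub>m p"
    using G by (auto simp: unitary_mat_def)
  have Wc: "blockdiag_id s G \<in> carrier_mat (s + p) (s + p)"
    by (rule blockdiag_id_carrier[OF Gc])
  have "(blockdiag_id s (ctrans G) * blockdiag_id s G) $$ (i,j) = 1\<^sub>m (s + p) $$ (i,j)"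
    if ij: "i < s + p" "j < s + p" for i j
  proof (cases "i < s")
    case True
    then show ?thesis
      using ij Gc index_blockdiag_id_mult[OF ctrans_carrier_mat[OF Gc] Wc ij]
      by (simp add: blockdiag_id_def del: index_mult_mat(1))
  next
    case False
    have "vec p (\<lambda>r. blockdiag_id s G $$ (s + r, j)) = (if j < s then 0\<^sub>v p else col G (j - s))"
      using Gc ij by (intro eq_vecI) (auto simp: blockdiag_id_def)
    moreover have "(ctrans G *\<^sub>v col G (j - s)) $ (i - s) = (ctrans G * G) $$ (i - s, j - s)" if "s \<le> j"
      using Gc ij that False by simp
    moreover have "row (ctrans G) (i - s) \<bullet> 0\<^sub>v p = 0"
      using Gc by (intro scalar_prod_right_zero) (simp add: carrier_vecI)
    ultimately show ?thesis
      using False ij Gc GG index_blockdiag_id_mult[OF ctrans_carrier_mat[OF Gc] Wc ij]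
      by (cases "j < s") (auto simp del: index_mult_mat(1))
  qed
  then have "ctrans (blockdiag_id s G) * blockdiag_id s G = 1\<^sub>m (s + p)"
    using Gc Wc by (intro eq_matI) (simp_all add: ctrans_blockdiag_id)
  then show ?thesis
    using Wc by (simp add: unitary_mat_def)
qed

lemma trailing_block_blockdiag_id_mult:
  assumes G: "G \<in> carrier_mat p p" and X: "X \<in> carrier_mat (s + p) n"
  shows "trailing_block s (blockdiag_id s G * X) = G * trailing_block s X"
proof (rule eq_matI)
  fix i j assume i: "i < dim_row (G * trailing_block s X)" and j: "j < dim_col (G * trailing_block s X)"
  have "vec p (\<lambda>r. X $$ (s + r, s + j)) = col (trailing_block s X) j"
    using X j by (intro eq_vecI) auto
  then show "trailing_block s (blockdiag_id s G * X) $$ (i,j) = (G * trailing_block s X) $$ (i,j)"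
    using G X i j index_blockdiag_id_mult[OF G X, of "s + i" "s + j"]
    by (simp del: index_mult_mat(1)) simp
qed (use G X in simp_all)

lemma subcol_norm_blockdiag_id_mult:
  assumes G: "unitary_mat p G" and X: "X \<in> carrier_mat (s + p) n" and a: "a \<le> s" and j: "j < n"
  shows "subcol_norm (blockdiag_id s G * X) a j = subcol_norm X a j"
proof -
  have Gc: "G \<in> carrier_mat p p"
    using G by (simp add: unitary_mat_def)
  have Wc: "blockdiag_id s G \<in> carrier_mat (s + p) (s + p)"
    by (rule blockdiag_id_carrier[OF Gc])
  have "tail_sqnorm a (blockdiag_id s G *\<^sub>v col X j) = tail_sqnorm a (col X j)"
  proof (rule tail_sqnorm_eq_if_head_eq)
    show "tail_sqnorm 0 (blockdiag_id s G *\<^sub>v col X j) = tail_sqnorm 0 (col X j)"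
      using X j by (intro unitary_tail_sqnorm[OF unitary_blockdiag_id[OF G]]) simp
    show "\<forall>r<a. r < dim_vec (col X j) \<longrightarrow> (blockdiag_id s G *\<^sub>v col X j) $ r = col X j $ r"
      using a X j index_blockdiag_id_mult[OF Gc X _ j] col_mult2[OF Wc X j, symmetric]
      by (auto simp del: index_mult_mat(1) col_mult2)
  qed (use Gc X in simp)
  moreover have "col (blockdiag_id s G * X) j = blockdiag_id s G *\<^sub>v col X j"
    by (rule col_mult2[OF Wc X j])
  ultimately show ?thesis
    using X j subcol_norm_eq_tail_sqnorm[of j "blockdiag_id s G * X" a] subcol_norm_eq_tail_sqnorm[of j X a]
    by simp
qed

lemma GB_form_blockdiag_id_mult:
  assumes GB: "GB_form s X" and X: "X \<in> carrier_mat (s + p) n" and G: "unitary_mat p G"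
  shows "GB_form s (blockdiag_id s G * X)"
proof (rule GB_formI)
  have Gc: "G \<in> carrier_mat p p"
    using G by (simp add: unitary_mat_def)
  have sn: "s \<le> n"
    using GB X by (simp add: GB_form_def)
  note entry = index_blockdiag_id_mult[OF Gc X]
  show "s \<le> min (dim_row (blockdiag_id s G * X)) (dim_col (blockdiag_id s G * X))"
    using Gc X sn by simp
  show "(blockdiag_id s G * X) $$ (i,j) = 0"
    if "j < s" "j < i" "i < dim_row (blockdiag_id s G * X)" for j i
  proof -
    have "vec p (\<lambda>r. X $$ (s + r, j)) = 0\<^sub>v p"
      using GB_form_below_diag[OF GB] that X by (intro eq_vecI) auto
    moreover have "row G (i - s) \<bullet> 0\<^sub>v p = 0"
      using Gc by (intro scalar_prod_right_zero) (simp add: carrier_vecI)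
    ultimately show ?thesis
      using GB_form_below_diag[OF GB] that Gc X sn entry[of i j] by (simp del: index_mult_mat(1))
  qed
  show "subcol_norm (blockdiag_id s G * X) i j \<le> cmod ((blockdiag_id s G * X) $$ (i,i))"
    if "i < s" "i \<le> j" "j < dim_col (blockdiag_id s G * X)" for i j
    using that GB_form_dominates[OF GB, of i j] subcol_norm_blockdiag_id_mult[OF G X, of i j]
      entry[of i i] X sn by (simp del: index_mult_mat(1))
qed

lemma ctrans_mult_blockdiag_id_mult:
  assumes Q: "Q \<in> carrier_mat (s + p) (s + p)" and M: "M \<in> carrier_mat p p"
    and A: "A \<in> carrier_mat (s + p) n" and U: "U \<in> carrier_mat n n" and V: "V \<in> carrier_mat n n"
  shows "ctrans (Q * blockdiag_id s M) * A * (U * V) = blockdiag_id s (ctrans M) * (ctrans Q * A * U * V)"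
proof -
  have W: "blockdiag_id s (ctrans M) \<in> carrier_mat (s + p) (s + p)"
    using M by (simp add: blockdiag_id_carrier)
  have QA: "ctrans Q * A \<in> carrier_mat (s + p) n"
    by (rule mult_carrier_mat[OF ctrans_carrier_mat[OF Q] A])
  have "ctrans (Q * blockdiag_id s M) = blockdiag_id s (ctrans M) * ctrans Q"
    using ctrans_mult[OF Q blockdiag_id_carrier[OF M]] by (simp add: ctrans_blockdiag_id[OF M])
  also have "\<dots> * A = blockdiag_id s (ctrans M) * (ctrans Q * A)"
    using Q A W by (simp add: assoc_mult_mat[of _ "s + p" "s + p" _ "s + p" _ n])
  also have "\<dots> * (U * V) = blockdiag_id s (ctrans M) * (ctrans Q * A * (U * V))"
    using W QA U V by (simp add: assoc_mult_mat[of _ "s + p" "s + p" _ n _ n])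
  also have "ctrans Q * A * (U * V) = ctrans Q * A * U * V"
    using QA U V by (simp add: assoc_mult_mat[of _ "s + p" n _ n _ n])
  finally show ?thesis .
qed

lemma permutes_fixing_prefix:
  fixes \<pi> :: "nat \<Rightarrow> nat"
  assumes "\<pi> permutes {..<b}" "\<forall>l<c. \<pi> l = l"
  shows "\<pi> permutes {c..<b}"
  using assms unfolding permutes_def by (metis atLeastLessThan_iff lessThan_iff not_le)

lemma permutes_shift:
  fixes g :: "nat \<Rightarrow> nat"
  assumes g: "g permutes {s..<s + t}"
  shows "(\<lambda>l. g (s + l) - s) permutes {..<t}"
proof (rule bij_imp_permutes)
  have "bij_betw ((+) s) {..<t} {s..<s + t}"
    by (rule bij_betw_byWitness[where f' = "\<lambda>x. x - s"]) auto
  moreover have "bij_betw (\<lambda>x. x - s) {s..<s + t} {..<t}"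
    by (rule bij_betw_byWitness[where f' = "(+) s"]) auto
  ultimately have "bij_betw ((\<lambda>x. x - s) \<circ> g \<circ> (+) s) {..<t} {..<t}"
    using permutes_imp_bij[OF g] by (blast intro: bij_betw_trans)
  then show "bij_betw (\<lambda>l. g (s + l) - s) {..<t} {..<t}"
    by (simp add: comp_def)
  show "g (s + l) - s = l" if "l \<notin> {..<t}" for l
    using that permutes_not_in[OF g] by simp
qed

lemma permutes_image_agree:
  fixes \<pi> \<sigma> f :: "nat \<Rightarrow> nat"
  assumes \<pi>: "\<pi> permutes {..<t}" and \<sigma>: "\<sigma> permutes {..<t}" and f: "f permutes {..<b}" and bt: "b \<le> t"
    and agree: "\<forall>l<b. \<pi> l = \<sigma> (f l)"
  shows "\<pi> ` {b..<t} = \<sigma> ` {b..<t}"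
proof -
  have "\<pi> ` {..<b} = \<sigma> ` (f ` {..<b})"
    using agree by (auto simp: image_image)
  then have prefix: "\<pi> ` {..<b} = \<sigma> ` {..<b}"
    by (simp add: permutes_image[OF f])
  have split: "{b..<t} = {..<t} - {..<b}"
    by auto
  show ?thesis
    unfolding split image_set_diff[OF permutes_inj[OF \<pi>]] image_set_diff[OF permutes_inj[OF \<sigma>]]
      prefix permutes_image[OF \<pi>] permutes_image[OF \<sigma>] ..
qed

lemma sorted_permutation_le_first:
  fixes g :: "nat \<Rightarrow> real" and \<sigma> :: "nat \<Rightarrow> nat"
  assumes \<sigma>: "\<sigma> permutes {..<t}" and sorted: "\<forall>l1 l2. l1 \<le> l2 \<and> l2 < t \<longrightarrow> g (\<sigma> l2) \<le> g (\<sigma> l1)"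
    and j: "j < t"
  shows "g j \<le> g (\<sigma> 0)"
proof -
  obtain l where "l < t" "j = \<sigma> l"
    using j permutes_image[OF \<sigma>] by (metis imageE lessThan_iff)
  then show ?thesis
    using sorted by blast
qed

lemma sorted_threshold_le_first:
  fixes \<gamma> :: "nat \<Rightarrow> real" and \<sigma> :: "nat \<Rightarrow> nat"
  assumes sigma: "\<sigma> permutes {..<t}" "\<forall>l1 l2. l1 \<le> l2 \<and> l2 < t \<longrightarrow> \<gamma> (\<sigma> l2) \<le> \<gamma> (\<sigma> l1)"
    and t: "0 < t" and nonneg: "0 \<le> \<gamma> (\<sigma> 0)" and mu: "\<mu> \<le> Max (\<gamma> ` {..<t})"
  shows "max (Max (insert 0 ((\<lambda>l. \<gamma> (\<sigma> l)) ` {b..<t}))) \<mu> \<le> \<gamma> (\<sigma> 0)"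
proof -
  have "\<gamma> (\<sigma> l) \<le> \<gamma> (\<sigma> 0)" if "l < t" for l
    using sorted_permutation_le_first[OF sigma] permutes_in_image[OF sigma(1), of l] that by simp
  then have "Max (insert 0 ((\<lambda>l. \<gamma> (\<sigma> l)) ` {b..<t})) \<le> \<gamma> (\<sigma> 0)"
    using nonneg by (intro Max.boundedI) auto
  moreover have "Max (\<gamma> ` {..<t}) \<le> \<gamma> (\<sigma> 0)"
    using t sorted_permutation_le_first[OF sigma] by (intro Max.boundedI) (auto simp: lessThan_empty_iff)
  ultimately show ?thesis
    using mu by simp
qed

lemma noncandidate_le_threshold:
  fixes \<gamma> :: "nat \<Rightarrow> real" and \<pi> \<sigma> f :: "nat \<Rightarrow> nat"
  assumes \<pi>: "\<pi> permutes {..<t}" "\<forall>l<b. \<pi> l = \<sigma> (f l)"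
    and \<sigma>: "\<sigma> permutes {..<t}" and f: "f permutes {..<b}" and bt: "b \<le> t"
    and tail: "\<forall>l\<in>{t..<q}. \<gamma> l \<le> \<mu>" and l: "l \<in> {b..<q}"
  shows "\<gamma> (\<pi> l) \<le> max (Max (insert 0 ((\<lambda>l. \<gamma> (\<sigma> l)) ` {b..<t}))) \<mu>"
proof (cases "l < t")
  case True
  then have "\<pi> l \<in> \<sigma> ` {b..<t}"
    using l permutes_image_agree[OF \<pi>(1) \<sigma> f bt \<pi>(2)] by auto
  then have "\<gamma> (\<pi> l) \<le> Max (insert 0 ((\<lambda>l. \<gamma> (\<sigma> l)) ` {b..<t}))"
    by (auto intro: Max_ge)
  then show ?thesis
    by simp
next
  case False
  then have "\<gamma> (\<pi> l) \<le> \<mu>"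
    using l tail permutes_not_in[OF \<pi>(1), of l] by simp
  then show ?thesis
    by simp
qed

subsection \<open>One step of the Golub--Businger algorithm\<close>

lemma swap_cols_dim [simp]:
  "dim_row (swap_cols R i j) = dim_row R" "dim_col (swap_cols R i j) = dim_col R"
  unfolding swap_cols_def by auto

lemma swap_cols_carrier: "R \<in> carrier_mat p q \<Longrightarrow> swap_cols R i j \<in> carrier_mat p q"
  by (intro carrier_matI) auto

lemma col_swap_cols:
  "i < dim_col R \<Longrightarrow> j < dim_col R \<Longrightarrow> c < dim_col R \<Longrightarrow>
    col (swap_cols R i j) c = col R (Transposition.transpose i j c)"
  unfolding swap_cols_def by (rule eq_vecI) (auto simp: transpose_def)

context
  fixes R H :: "complex mat" and p q i jmax :: nat
  assumes R: "R \<in> carrier_mat p q" and i: "i < p" "i \<le> jmax" "jmax < q"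
    and H: "householder p i (col (swap_cols R i jmax) i) H"
begin

lemma gb_step_carrier: "H * swap_cols R i jmax \<in> carrier_mat p q"
  by (rule mult_carrier_mat[OF householder_carrier[OF H] swap_cols_carrier[OF R]])

lemma gb_step_col:
  assumes "c < q"
  shows "col (H * swap_cols R i jmax) c = H *\<^sub>v col R (Transposition.transpose i jmax c)"
  using col_mult2[OF householder_carrier[OF H] swap_cols_carrier[OF R] assms] assms R i
  by (simp add: col_swap_cols)

lemma gb_step_subcol_norm:
  assumes a: "a \<le> i" and c: "c < q"
  shows "subcol_norm (H * swap_cols R i jmax) a c = subcol_norm R a (Transposition.transpose i jmax c)"
proof -
  have T: "Transposition.transpose i jmax c < q"
    using c i by (auto simp: transpose_def)
  have "subcol_norm (H * swap_cols R i jmax) a c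
      = sqrt (tail_sqnorm a (H *\<^sub>v col R (Transposition.transpose i jmax c)))"
    using c R by (simp add: subcol_norm_eq_tail_sqnorm gb_step_col)
  also have "\<dots> = subcol_norm R a (Transposition.transpose i jmax c)"
    using T R a by (simp add: householder_tail_sqnorm[OF H] subcol_norm_eq_tail_sqnorm)
  finally show ?thesis .
qed

lemma gb_step_pivot: "cmod ((H * swap_cols R i jmax) $$ (i,i)) = subcol_norm R i jmax"
proof -
  have x: "col (swap_cols R i jmax) i = col R jmax"
    using R i by (simp add: col_swap_cols)
  have "(H * swap_cols R i jmax) $$ (i,i) = col (H * swap_cols R i jmax) i $ i"
    using i by (intro index_eq_col_index[OF gb_step_carrier]) auto
  also have "\<dots> = (H *\<^sub>v col (swap_cols R i jmax) i) $ i"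
    using gb_step_col[of i] x i by simp
  finally have "cmod ((H * swap_cols R i jmax) $$ (i,i)) = sqrt (\<Sum>l\<in>{i..<p}. (cmod (col R jmax $ l))\<^sup>2)"
    using H x by (simp add: householder_def)
  also have "\<dots> = subcol_norm R i jmax"
    using R i by (simp add: subcol_norm_def)
  finally show ?thesis .
qed

lemma gb_step_below_pivot:
  assumes "i < r" "r < p"
  shows "(H * swap_cols R i jmax) $$ (r,i) = 0"
proof -
  have "(H * swap_cols R i jmax) $$ (r,i) = col (H * swap_cols R i jmax) i $ r"
    using assms i by (intro index_eq_col_index[OF gb_step_carrier]) auto
  also have "\<dots> = (H *\<^sub>v col (swap_cols R i jmax) i) $ r"
    using gb_step_col[of i] R i by (simp add: col_swap_cols)
  finally have "(H * swap_cols R i jmax) $$ (r,i) = (H *\<^sub>v col (swap_cols R i jmax) i) $ r" .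
  then show ?thesis
    using H assms by (simp add: householder_def)
qed

lemma gb_step_keeps_reduced_col:
  assumes c: "c < i" and reduced: "\<forall>r. c < r \<and> r < p \<longrightarrow> R $$ (r,c) = 0"
  shows "col (H * swap_cols R i jmax) c = col R c"
proof -
  have "Transposition.transpose i jmax c = c"
    using c i by (simp add: transpose_def)
  then have "col (H * swap_cols R i jmax) c = H *\<^sub>v col R c"
    using gb_step_col[of c] c i by simp
  also have "\<dots> = col R c"
    using R c i reduced by (intro householder_fixes_vanishing_tail[OF H]) auto
  finally show ?thesis .
qed

end

subsection \<open>Runs of the Golub--Businger algorithm\<close>

lemma gb_run_carrier:
  assumes "gb_run B i f Hs R"
  shows "R \<in> carrier_mat (dim_row B) (dim_col B)" "length Hs = i" "i \<le> min (dim_row B) (dim_col B)"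
  using assms by (induction rule: gb_run.induct) (auto intro: gb_step_carrier)

lemma gb_run_permutes:
  assumes "gb_run B i f Hs R"
  shows "f permutes {..<dim_col B}"
  using assms
proof (induction rule: gb_run.induct)
  case gb_init
  show ?case by (rule permutes_id)
next
  case (gb_step i f Hs R jmax H)
  then show ?case
    by (intro permutes_compose[OF permutes_swap_id]) auto
qed

lemma gb_run_householders:
  assumes "gb_run B i f Hs R" "H \<in> set Hs"
  shows "unitary_mat (dim_row B) H" "ctrans H = H"
  using assms
  by (induction rule: gb_run.induct) (auto intro: householder_unitary householder_hermitian)

lemma gb_run_unitary_prefix:
  assumes "gb_run B d f Hs R"
  shows "unitary_mat (dim_row B) (ctrans (foldr (*) (take c Hs) (1\<^sub>m (dim_row B))))"
  using gb_run_householders(1)[OF assms]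
  by (intro unitary_mat_ctrans unitary_mat_foldr) (auto dest: in_set_takeD)

lemma gb_run_col:
  assumes "gb_run B i f Hs R" "j < dim_col B"
  shows "col R j = ctrans (foldr (*) Hs (1\<^sub>m (dim_row B))) *\<^sub>v col B (f j)"
  using assms
proof (induction arbitrary: j rule: gb_run.induct)
  case gb_init
  have "col B j \<in> carrier_vec (dim_row B)"
    by (intro carrier_vecI) simp
  then show ?case by simp
next
  case (gb_step i f Hs R jmax H)
  define p where "p = dim_row B"
  define F where "F = foldr (*) Hs (1\<^sub>m p)"
  define T where "T = Transposition.transpose i jmax"
  have Hc: "H \<in> carrier_mat p p" and Hh: "ctrans H = H"
    using householder_carrier householder_hermitian gb_step.hyps(6) p_def by blast+
  have Fc: "F \<in> carrier_mat p p"
    unfolding F_def using gb_run_householders(1)[OF gb_step.hyps(1)]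
    by (intro foldr_mult_carrier) (simp add: unitary_mat_def p_def)
  have Tj: "T j < dim_col B"
    using gb_step.hyps(3,4,5) gb_step.prems by (auto simp: T_def transpose_def)
  have v: "col B (f (T j)) \<in> carrier_vec p"
    unfolding p_def by (intro carrier_vecI) simp
  have "col (H * swap_cols R i jmax) j = H *\<^sub>v col R (T j)"
    unfolding T_def using gb_step.hyps(2-6) gb_step.prems
    by (intro gb_step_col[OF gb_run_carrier(1)[OF gb_step.hyps(1)]]) auto
  also have "\<dots> = H *\<^sub>v (ctrans F *\<^sub>v col B (f (T j)))"
    unfolding F_def p_def using gb_step.IH[OF Tj] by simp
  also have "\<dots> = (H * ctrans F) *\<^sub>v col B (f (T j))"
    using assoc_mult_mat_vec[OF Hc ctrans_carrier_mat[OF Fc] v] by simp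
  also have "H * ctrans F = ctrans (foldr (*) (Hs @ [H]) (1\<^sub>m p))"
  proof -
    have "\<forall>G\<in>set Hs. G \<in> carrier_mat p p"
      using gb_run_householders(1)[OF gb_step.hyps(1)] by (simp add: unitary_mat_def p_def)
    then have "foldr (*) (Hs @ [H]) (1\<^sub>m p) = F * H"
      unfolding F_def by (rule foldr_mult_snoc[OF _ Hc])
    then show ?thesis
      using ctrans_mult[OF Fc Hc] Hh by simp
  qed
  finally show ?case
    by (simp add: T_def p_def)
qed

lemma gb_run_below_diag:
  assumes "gb_run B i f Hs R" "j < i" "j < r" "r < dim_row B"
  shows "R $$ (r,j) = 0"
  using assms
proof (induction arbitrary: j r rule: gb_run.induct)
  case gb_init
  then show ?case by simp
next
  case (gb_step i f Hs R jmax H)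
  note Rc = gb_run_carrier(1)[OF gb_step.hyps(1)]
  have ip: "i < dim_row B"
    using gb_step.hyps(2) by simp
  have Sc: "H * swap_cols R i jmax \<in> carrier_mat (dim_row B) (dim_col B)"
    by (rule gb_step_carrier[OF Rc ip gb_step.hyps(3,4,6)])
  show ?case
  proof (cases "j < i")
    case True
    have "col (H * swap_cols R i jmax) j = col R j"
      using gb_step.IH[OF True] by (intro gb_step_keeps_reduced_col[OF Rc ip gb_step.hyps(3,4,6) True]) blast
    then show ?thesis
      using index_eq_col_index[OF Sc] index_eq_col_index[OF Rc] gb_step.IH[OF True] gb_step.prems
        gb_step.hyps(2) True by (metis min_less_iff_conj order.strict_trans)
  next
    case False
    then have "j = i"
      using gb_step.prems(1) by simp
    then show ?thesis
      using gb_step_below_pivot[OF Rc ip gb_step.hyps(3,4,6)] gb_step.prems by simp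
  qed
qed

lemma gb_run_step_keeps_col:
  assumes run: "gb_run B i f Hs R" and i: "i < min (dim_row B) (dim_col B)" "i \<le> jmax" "jmax < dim_col B"
    and H: "householder (dim_row B) i (col (swap_cols R i jmax) i) H" and c: "c < i"
  shows "col (H * swap_cols R i jmax) c = col R c" "(H * swap_cols R i jmax) $$ (c,c) = R $$ (c,c)"
proof -
  note Rc = gb_run_carrier(1)[OF run]
  have ip: "i < dim_row B"
    using i by simp
  show col: "col (H * swap_cols R i jmax) c = col R c"
    using gb_run_below_diag[OF run c]
    by (intro gb_step_keeps_reduced_col[OF Rc ip i(2,3) H c]) blast
  have "c < dim_row B" "c < dim_col B"
    using i c by auto
  then show "(H * swap_cols R i jmax) $$ (c,c) = R $$ (c,c)"
    using col index_eq_col_index[OF gb_step_carrier[OF Rc ip i(2,3) H]] index_eq_col_index[OF Rc]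
    by metis
qed

lemma gb_run_pivot_dominates:
  assumes "gb_run B i f Hs R" "j < i" "j \<le> j'" "j' < dim_col B"
  shows "subcol_norm R j j' \<le> cmod (R $$ (j,j))"
  using assms
proof (induction arbitrary: j j' rule: gb_run.induct)
  case gb_init
  then show ?case by simp
next
  case (gb_step i f Hs R jmax H)
  define T where "T = Transposition.transpose i jmax"
  note Rc = gb_run_carrier(1)[OF gb_step.hyps(1)]
  have ip: "i < dim_row B"
    using gb_step.hyps(2) by simp
  have T: "T j' < dim_col B" "j \<le> T j'" "i \<le> j' \<Longrightarrow> i \<le> T j'"
    using gb_step.hyps(2-4) gb_step.prems by (auto simp: T_def transpose_def)
  have "subcol_norm (H * swap_cols R i jmax) j j' = subcol_norm R j (T j')"
    unfolding T_def using gb_step.prems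
    by (intro gb_step_subcol_norm[OF Rc ip gb_step.hyps(3,4,6)]) auto
  also have "\<dots> \<le> cmod ((H * swap_cols R i jmax) $$ (j,j))"
  proof (cases "j < i")
    case True
    then show ?thesis
      using gb_step.IH[OF True T(2,1)] gb_run_step_keeps_col(2)[OF gb_step.hyps(1-4,6) True] by simp
  next
    case False
    then have "j = i"
      using gb_step.prems(1) by simp
    then show ?thesis
      using gb_step.hyps(5) T gb_step.prems gb_step_pivot[OF Rc ip gb_step.hyps(3,4,6)] by simp
  qed
  finally show ?case .
qed

lemma gb_run_GB_form:
  assumes "gb_run B i f Hs R"
  shows "GB_form i R"
  using gb_run_carrier[OF assms] gb_run_below_diag[OF assms] gb_run_pivot_dominates[OF assms]
  by (intro GB_formI) auto

lemma gb_run_pivots_antimono: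
  assumes "gb_run B i f Hs R" "l \<le> l'" "l' < i"
  shows "cmod (R $$ (l',l')) \<le> cmod (R $$ (l,l))"
  using assms
proof (induction arbitrary: l l' rule: gb_run.induct)
  case gb_init
  then show ?case by simp
next
  case (gb_step i f Hs R jmax H)
  note Rc = gb_run_carrier(1)[OF gb_step.hyps(1)]
  note keeps_diag = gb_run_step_keeps_col(2)[OF gb_step.hyps(1-4,6)]
  have ip: "i < dim_row B"
    using gb_step.hyps(2) by simp
  consider "l' < i" | "l < i" "l' = i" | "l = i" "l' = i"
    using gb_step.prems by linarith
  then show ?case
  proof cases
    case 1
    then show ?thesis
      using gb_step.IH[OF gb_step.prems(1)] gb_step.prems keeps_diag by simp
  next
    case 2
    have "cmod ((H * swap_cols R i jmax) $$ (i,i)) = subcol_norm R i jmax"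
      by (rule gb_step_pivot[OF Rc ip gb_step.hyps(3,4,6)])
    also have "\<dots> \<le> subcol_norm R l jmax"
      using 2 by (intro subcol_norm_antimono) simp
    also have "\<dots> \<le> cmod (R $$ (l,l))"
      using 2 gb_step.hyps(3,4) by (intro gb_run_pivot_dominates[OF gb_step.hyps(1)]) auto
    finally show ?thesis
      using 2 keeps_diag by simp
  qed simp
qed

lemma gb_run_first_pivot:
  assumes run: "gb_run B i f Hs R" and "0 < i" "j < dim_col B"
  shows "subcol_norm B 0 j \<le> cmod (R $$ (0,0))"
proof -
  have "j \<in> f ` {..<dim_col B}"
    using assms(3) permutes_image[OF gb_run_permutes[OF run]] by simp
  then obtain j0 where j0: "j0 < dim_col B" "f j0 = j"
    by auto
  have "unitary_mat (dim_row B) (ctrans (foldr (*) Hs (1\<^sub>m (dim_row B))))"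
    using gb_run_householders(1)[OF run] by (intro unitary_mat_ctrans unitary_mat_foldr) blast
  then have "tail_sqnorm 0 (col R j0) = tail_sqnorm 0 (col B j)"
    using gb_run_col[OF run j0(1)] j0(2) by (simp add: unitary_tail_sqnorm carrier_vecI)
  then have "subcol_norm B 0 j = subcol_norm R 0 j0"
    using assms(3) j0(1) gb_run_carrier(1)[OF run] by (simp add: subcol_norm_eq_tail_sqnorm)
  also have "\<dots> \<le> cmod (R $$ (0,0))"
    using assms(2) j0(1) by (intro gb_run_pivot_dominates[OF run]) auto
  finally show ?thesis .
qed

lemma gb_run_pivots_above_threshold:
  fixes \<theta> :: real
  assumes run: "gb_run B d f Hs R" and d: "0 < d" and first: "\<theta> \<le> (cmod (R $$ (0,0)))\<^sup>2"
    and c: "c = Max {i\<in>{1..d}. \<theta> \<le> (cmod (R $$ (i - 1, i - 1)))\<^sup>2}"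
  shows "1 \<le> c" "c \<le> d" "\<And>l. l < c \<Longrightarrow> \<theta> \<le> (cmod (R $$ (l,l)))\<^sup>2"
proof -
  let ?S = "{i\<in>{1..d}. \<theta> \<le> (cmod (R $$ (i - 1, i - 1)))\<^sup>2}"
  have "1 \<in> ?S"
    using d first by simp
  then have "c \<in> ?S"
    unfolding c by (intro Max_in) auto
  then have pivot: "\<theta> \<le> (cmod (R $$ (c - 1, c - 1)))\<^sup>2"
    by simp
  show c1: "1 \<le> c" and cd: "c \<le> d"
    using \<open>c \<in> ?S\<close> by auto
  show "\<theta> \<le> (cmod (R $$ (l,l)))\<^sup>2" if "l < c" for l
  proof -
    have "cmod (R $$ (c - 1, c - 1)) \<le> cmod (R $$ (l,l))"
      using that c1 cd by (intro gb_run_pivots_antimono[OF run]) auto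
    then show ?thesis
      using pivot by (meson norm_ge_zero order_trans power_mono)
  qed
qed

lemma gb_run_prefix:
  assumes "gb_run B i f Hs R" "c \<le> i"
  shows "\<exists>f' R'. gb_run B c f' (take c Hs) R' \<and> (\<forall>l<c. f' l = f l) \<and> (\<forall>l<c. col R' l = col R l)"
  using assms
proof (induction arbitrary: c rule: gb_run.induct)
  case gb_init
  then show ?case
    using gb_run.gb_init by auto
next
  case (gb_step i f Hs R jmax H)
  show ?case
  proof (cases "c = Suc i")
    case True
    then show ?thesis
      using gb_run.gb_step[OF gb_step.hyps] gb_run_carrier(2)[OF gb_step.hyps(1)]
      by (intro exI[of _ "f \<circ> Transposition.transpose i jmax"] exI[of _ "H * swap_cols R i jmax"])
        (simp add: comp_def)
  next
    case False
    then have c: "c \<le> i"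
      using gb_step.prems by simp
    then obtain f' R' where "gb_run B c f' (take c Hs) R'" "\<forall>l<c. f' l = f l" "\<forall>l<c. col R' l = col R l"
      using gb_step.IH by blast
    moreover have "take c (Hs @ [H]) = take c Hs"
      using c gb_run_carrier(2)[OF gb_step.hyps(1)] by simp
    moreover have "(f \<circ> Transposition.transpose i jmax) l = f l" if "l < c" for l
      using that c gb_step.hyps(3) by (simp add: transpose_def)
    moreover have "col (H * swap_cols R i jmax) l = col R l" if "l < c" for l
      using that c by (intro gb_run_step_keeps_col(1)[OF gb_step.hyps(1-4,6)]) simp
    ultimately show ?thesis
      by metis
  qed
qed

lemma gb_run_truncate:
  assumes run: "gb_run B d f Hs R" and cd: "c \<le> d"
  obtains X where "GB_form c X" "X \<in> carrier_mat (dim_row B) (dim_col B)"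
    "\<And>l. l < dim_col B \<Longrightarrow> col X l = ctrans (foldr (*) (take c Hs) (1\<^sub>m (dim_row B))) *\<^sub>v col B (f l)"
    "\<And>l. l < c \<Longrightarrow> X $$ (l,l) = R $$ (l,l)"
proof -
  obtain f' R' where run': "gb_run B c f' (take c Hs) R'"
    and agree: "\<forall>l<c. f' l = f l" "\<forall>l<c. col R' l = col R l"
    using gb_run_prefix[OF run cd] by blast
  have f: "f permutes {..<dim_col B}" and f': "f' permutes {..<dim_col B}"
    using gb_run_permutes run run' by blast+
  note R'c = gb_run_carrier(1)[OF run']
  have cq: "c \<le> min (dim_row B) (dim_col B)"
    by (rule gb_run_carrier(3)[OF run'])
  define \<rho> where "\<rho> = Hilbert_Choice.inv f' \<circ> f"
  have f'\<rho>: "f' (\<rho> l) = f l" for l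
    by (simp add: \<rho>_def permutes_inverses(1)[OF f'])
  have \<rho>_fix: "\<forall>l<c. \<rho> l = l"
    using agree(1) permutes_inverses(2)[OF f'] by (simp add: \<rho>_def) metis
  have "\<rho> permutes {c..<dim_col B}"
  proof (rule permutes_fixing_prefix[OF _ \<rho>_fix])
    show "\<rho> permutes {..<dim_col B}"
      unfolding \<rho>_def by (rule permutes_compose[OF f permutes_inv[OF f']])
  qed
  then have \<rho>: "\<rho> l < dim_col B" if "l < dim_col B" for l
    using that permutes_in_image[of \<rho> "{c..<dim_col B}" l] permutes_not_in[of \<rho> "{c..<dim_col B}" l]
    by (cases "c \<le> l") auto
  show ?thesis
  proof (rule that)
    show "GB_form c (R' * perm_mat (dim_col B) \<rho>)"
      by (rule GB_form_mult_perm_mat[OF gb_run_GB_form[OF run'] R'c \<open>\<rho> permutes _\<close>])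
    show "R' * perm_mat (dim_col B) \<rho> \<in> carrier_mat (dim_row B) (dim_col B)"
      using R'c by simp
    show "col (R' * perm_mat (dim_col B) \<rho>) l = ctrans (foldr (*) (take c Hs) (1\<^sub>m (dim_row B))) *\<^sub>v col B (f l)"
      if "l < dim_col B" for l
      using that \<rho>[OF that] col_mult_perm_mat[OF R'c] gb_run_col[OF run'] f'\<rho> by simp
    show "(R' * perm_mat (dim_col B) \<rho>) $$ (l,l) = R $$ (l,l)" if "l < c" for l
    proof -
      have l: "l < dim_row B" "l < dim_col B" "\<rho> l = l"
        using that cq \<rho>_fix by auto
      have "(R' * perm_mat (dim_col B) \<rho>) $$ (l,l) = col R' l $ l"
        using l R'c by (simp add: index_mult_perm_mat del: index_mult_mat(1))
      also have "\<dots> = R $$ (l,l)"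
        using agree(2) that l gb_run_carrier(1)[OF run] by simp
      finally show ?thesis .
    qed
  qed
qed

lemma col_mat_select_cols:
  assumes "T \<in> carrier_mat p q" "l < b" "g l < q"
  shows "col (mat p b (\<lambda>(i,l). T $$ (i, g l))) l = col T (g l)"
  using assms by (intro eq_vecI) auto

lemma candidate_threshold_le_first_pivot:
  fixes T B R :: "complex mat" and \<gamma> :: "nat \<Rightarrow> real" and \<sigma> :: "nat \<Rightarrow> nat"
  assumes T: "T \<in> carrier_mat p q" and b: "1 \<le> b" "b \<le> t" "t \<le> q"
    and gamma: "\<forall>l<q. \<gamma> l = (subcol_norm T 0 l)\<^sup>2" and mu: "\<mu> \<le> Max (\<gamma> ` {..<t})"
    and sigma: "\<sigma> permutes {..<t}" "\<forall>l1 l2. l1 \<le> l2 \<and> l2 < t \<longrightarrow> \<gamma> (\<sigma> l2) \<le> \<gamma> (\<sigma> l1)"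
    and run: "gb_run (mat p b (\<lambda>(i,l). T $$ (i, \<sigma> l))) d f Hs R" "0 < d"
  shows "max (Max (insert 0 ((\<lambda>l. \<gamma> (\<sigma> l)) ` {b..<t}))) \<mu> \<le> (cmod (R $$ (0,0)))\<^sup>2"
proof -
  have \<sigma>0: "\<sigma> 0 < q"
    using permutes_in_image[OF sigma(1), of 0] b by simp
  have "subcol_norm (mat p b (\<lambda>(i,l). T $$ (i, \<sigma> l))) 0 0 = subcol_norm T 0 (\<sigma> 0)"
    using b T \<sigma>0 col_mat_select_cols[OF T, of 0 b \<sigma>] by (simp add: subcol_norm_eq_tail_sqnorm)
  then have "subcol_norm T 0 (\<sigma> 0) \<le> cmod (R $$ (0,0))"
    using gb_run_first_pivot[OF run, of 0] b by simp
  then have "\<gamma> (\<sigma> 0) \<le> (cmod (R $$ (0,0)))\<^sup>2"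
    using gamma \<sigma>0 subcol_norm_nonneg by (simp add: power_mono)
  moreover have "max (Max (insert 0 ((\<lambda>l. \<gamma> (\<sigma> l)) ` {b..<t}))) \<mu> \<le> \<gamma> (\<sigma> 0)"
    using b gamma \<sigma>0 by (intro sorted_threshold_le_first[OF sigma _ _ mu]) simp_all
  ultimately show ?thesis
    by linarith
qed

lemma GB_form_candidate_update:
  fixes T B R :: "complex mat" and p q t b d c :: nat and \<sigma> f \<pi> :: "nat \<Rightarrow> nat"
    and Hs :: "complex mat list" and \<gamma> :: "nat \<Rightarrow> real" and \<mu> \<delta> :: real
  assumes T: "T \<in> carrier_mat p q" and p: "0 < p"
    and b: "1 \<le> b" "b \<le> t" "t \<le> q"
    and gamma: "\<forall>l<q. \<gamma> l = (subcol_norm T 0 l)\<^sup>2"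
    and mu: "\<forall>l\<in>{t..<q}. \<gamma> l \<le> \<mu>" "\<mu> \<le> Max (\<gamma> ` {..<t})"
    and sigma: "\<sigma> permutes {..<t}" "\<forall>l1 l2. l1 \<le> l2 \<and> l2 < t \<longrightarrow> \<gamma> (\<sigma> l2) \<le> \<gamma> (\<sigma> l1)"
    and delta: "\<delta> = Max (insert 0 ((\<lambda>l. \<gamma> (\<sigma> l)) ` {b..<t}))"
    and B: "B = mat p b (\<lambda>(i,l). T $$ (i, \<sigma> l))"
    and d: "d = min p b"
    and run: "gb_run B d f Hs R"
    and c: "c = Max {i\<in>{1..d}. (cmod (R $$ (i - 1, i - 1)))\<^sup>2 \<ge> max \<delta> \<mu>}"
    and \<pi>: "\<pi> permutes {..<t}" "\<forall>l<b. \<pi> l = \<sigma> (f l)"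
  shows "GB_form c (ctrans (foldr (*) (take c Hs) (1\<^sub>m p)) * (T * perm_mat q \<pi>))"
proof -
  define G where "G = ctrans (foldr (*) (take c Hs) (1\<^sub>m p))"
  have dimB: "dim_row B = p" "dim_col B = b"
    by (simp_all add: B)
  have f: "f permutes {..<b}"
    using gb_run_permutes[OF run] dimB by simp
  have \<pi>_lt: "\<pi> l < q" if "l < q" for l
    using permutes_in_image[OF \<pi>(1), of l] permutes_not_in[OF \<pi>(1), of l] that b by (cases "l < t") auto
  have "max \<delta> \<mu> \<le> (cmod (R $$ (0,0)))\<^sup>2"
    using candidate_threshold_le_first_pivot[OF T b gamma mu(2) sigma run[unfolded B]] b p
    by (simp add: delta d)
  then have cd: "c \<le> d" and pivots: "\<And>l. l < c \<Longrightarrow> max \<delta> \<mu> \<le> (cmod (R $$ (l,l)))\<^sup>2"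
    using gb_run_pivots_above_threshold[OF run _ _ c] b p by (auto simp: d)
  obtain X where GBX: "GB_form c X" and X: "X \<in> carrier_mat p b"
    and colX: "\<And>l. l < b \<Longrightarrow> col X l = G *\<^sub>v col B (f l)"
    and diagX: "\<And>l. l < c \<Longrightarrow> X $$ (l,l) = R $$ (l,l)"
    using gb_run_truncate[OF run cd] unfolding dimB G_def by blast
  have Gu: "unitary_mat p G"
    using gb_run_unitary_prefix[OF run] dimB by (simp add: G_def)
  have TP: "T * perm_mat q \<pi> \<in> carrier_mat p q"
    using T by simp
  have Gc: "G \<in> carrier_mat p p"
    using Gu by (simp add: unitary_mat_def)
  have GTP: "G * (T * perm_mat q \<pi>) \<in> carrier_mat p q"
    by (rule mult_carrier_mat[OF Gc TP])
  show ?thesis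
    unfolding G_def[symmetric]
  proof (rule GB_form_extend_small_columns[OF GBX X GTP order.trans[OF b(2,3)]])
    show "\<forall>l<b. col (G * (T * perm_mat q \<pi>)) l = col X l"
    proof (intro allI impI)
      fix l assume l: "l < b"
      then have "f l < b" "\<sigma> (f l) < q"
        using permutes_in_image[OF f, of l] permutes_in_image[OF sigma(1), of "f l"] b by auto
      moreover have "col (G * (T * perm_mat q \<pi>)) l = G *\<^sub>v col T (\<pi> l)"
        using l b col_mult2[OF Gc TP, of l] col_mult_perm_mat[OF T, of l \<pi>] \<pi>_lt by simp
      ultimately show "col (G * (T * perm_mat q \<pi>)) l = col X l"
        using l \<pi>(2) colX col_mat_select_cols[OF T] by (simp add: B)
    qed
    show "\<forall>l\<in>{b..<q}. \<forall>i<c. subcol_norm (G * (T * perm_mat q \<pi>)) 0 l \<le> cmod (X $$ (i,i))"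
    proof (intro ballI allI impI)
      fix l i assume l: "l \<in> {b..<q}" and i: "i < c"
      have "\<gamma> (\<pi> l) \<le> max \<delta> \<mu>"
        unfolding delta by (rule noncandidate_le_threshold[OF \<pi> sigma(1) f b(2) mu(1) l])
      also have "\<dots> \<le> (cmod (X $$ (i,i)))\<^sup>2"
        using pivots[OF i] diagX[OF i] by simp
      finally have "\<gamma> (\<pi> l) \<le> (cmod (X $$ (i,i)))\<^sup>2" .
      moreover have "subcol_norm (G * (T * perm_mat q \<pi>)) 0 l = sqrt (\<gamma> (\<pi> l))"
        using l gamma \<pi>_lt subcol_norm_nonneg
        by (simp add: subcol_norm_unitary_mult[OF Gu TP] subcol_norm_mult_perm_mat[OF T])
      ultimately show "subcol_norm (G * (T * perm_mat q \<pi>)) 0 l \<le> cmod (X $$ (i,i))"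
        by (simp add: real_le_lsqrt)
    qed
  qed
qed

lemma GB_form_trailing_candidate_update:
  fixes R B Rh :: "complex mat" and m n s t b d c :: nat and \<sigma> f ph :: "nat \<Rightarrow> nat"
    and Hs :: "complex mat list" and \<gamma> :: "nat \<Rightarrow> real" and \<mu> \<delta> :: real
  assumes R: "R \<in> carrier_mat m n" and st: "s < m" "s + t \<le> n"
    and gamma: "\<forall>j. \<gamma> j = (subcol_norm R s j)\<^sup>2"
    and mu: "\<forall>j\<in>{s + t..<n}. \<gamma> j \<le> \<mu>" "Max (\<gamma> ` {s..<s + t}) \<ge> \<mu>"
    and b: "1 \<le> b" "b \<le> t"
    and sigma: "\<sigma> permutes {..<t}"
      "\<forall>l1 l2. l1 \<le> l2 \<and> l2 < t \<longrightarrow> \<gamma> (s + \<sigma> l2) \<le> \<gamma> (s + \<sigma> l1)"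
    and delta: "\<delta> = Max (insert 0 ((\<lambda>l. \<gamma> (s + \<sigma> l)) ` {b..<t}))"
    and B: "B = mat (m - s) b (\<lambda>(i,l). R $$ (s + i, s + \<sigma> l))"
    and d: "d = min (m - s) b"
    and run: "gb_run B d f Hs Rh"
    and c: "c = Max {i\<in>{1..d}. (cmod (Rh $$ (i - 1, i - 1)))\<^sup>2 \<ge> max \<delta> \<mu>}"
    and ph: "ph permutes {s..<s + t}" "\<forall>l<b. ph (s + l) = s + \<sigma> (f l)"
  shows "GB_form c (ctrans (foldr (*) (take c Hs) (1\<^sub>m (m - s))) * trailing_block s (R * perm_mat n ph))"
proof -
  define \<pi> where "\<pi> = (\<lambda>l. ph (s + l) - s)"
  have T: "trailing_block s R \<in> carrier_mat (m - s) (n - s)"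
    using R by (intro carrier_matI) simp_all
  have "trailing_block s (R * perm_mat n ph) = trailing_block s R * perm_mat (n - s) \<pi>"
    using trailing_block_mult_perm_mat[OF R permutes_subset[OF ph(1)]] st by (simp add: \<pi>_def)
  moreover have "GB_form c (ctrans (foldr (*) (take c Hs) (1\<^sub>m (m - s))) * (trailing_block s R * perm_mat (n - s) \<pi>))"
  proof -
    have dims: "0 < m - s" "t \<le> n - s"
      using st by simp_all
    have gam: "\<forall>l<n - s. \<gamma> (s + l) = (subcol_norm (trailing_block s R) 0 l)\<^sup>2"
      using gamma subcol_norm_trailing_block[of s R] R st by simp
    have tail: "\<forall>l\<in>{t..<n - s}. \<gamma> (s + l) \<le> \<mu>"
      using mu(1) by auto
    have "{s..<s + t} = (+) s ` {..<t}"
      by (simp add: lessThan_atLeast0 add.commute)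
    then have top: "\<mu> \<le> Max ((\<lambda>l. \<gamma> (s + l)) ` {..<t})"
      using mu(2) by (simp add: image_image)
    have B': "B = mat (m - s) b (\<lambda>(i,l). trailing_block s R $$ (i, \<sigma> l))"
    proof (rule eq_matI)
      fix i l assume "i < dim_row (mat (m - s) b (\<lambda>(i,l). trailing_block s R $$ (i, \<sigma> l)))"
        and l: "l < dim_col (mat (m - s) b (\<lambda>(i,l). trailing_block s R $$ (i, \<sigma> l)))"
      moreover have "\<sigma> l < n - s"
        using permutes_in_image[OF sigma(1), of l] l b st by simp
      ultimately show "B $$ (i,l) = mat (m - s) b (\<lambda>(i,l). trailing_block s R $$ (i, \<sigma> l)) $$ (i,l)"
        using R by (simp add: B)
    qed (simp_all add: B)
    have \<pi>: "\<pi> permutes {..<t}" "\<forall>l<b. \<pi> l = \<sigma> (f l)"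
      using permutes_shift[OF ph(1)] ph(2) by (simp_all add: \<pi>_def)
    show ?thesis
      by (rule GB_form_candidate_update[where \<gamma> = "\<lambda>l. \<gamma> (s + l)",
            OF T dims(1) b dims(2) gam tail top sigma delta B' d run c \<pi>])
  qed
  ultimately show ?thesis
    by simp
qed

theorem lemma3p1:
  fixes A Q Pi B Rh Qh :: "complex mat" and m n k s t b d c :: nat
    and p \<sigma> f ph :: "nat \<Rightarrow> nat" and Hs :: "complex mat list"
    and \<gamma> :: "nat \<Rightarrow> real" and \<mu> \<delta> :: real
  assumes A: "A \<in> carrier_mat m n"
    and k: "1 \<le> k" "k \<le> min m n"
    and st: "s < k" "1 \<le> t" "s + t \<le> n"
    and Q: "unitary_mat m Q"
    and Pi: "p permutes {..<n}" "Pi = perm_mat n p"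
    and GBs: "GB_form s (ctrans Q * A * Pi)"
    and gamma: "\<forall>j. \<gamma> j = (subcol_norm (ctrans Q * A * Pi) s j)\<^sup>2"
    and mu: "\<mu> = Max (insert 0 ((\<lambda>j. (subcol_norm (A * Pi) 0 j)\<^sup>2) ` {s+t..<n}))"
    and maxgam: "Max (\<gamma> ` {s..<s+t}) \<ge> \<mu>"
    and b: "1 \<le> b" "b \<le> t"
    and sigma: "\<sigma> permutes {..<t}"
      "\<forall>l1 l2. l1 \<le> l2 \<and> l2 < t \<longrightarrow> \<gamma> (s + \<sigma> l2) \<le> \<gamma> (s + \<sigma> l1)"
    and delta: "\<delta> = Max (insert 0 ((\<lambda>l. \<gamma> (s + \<sigma> l)) ` {b..<t}))"
    and B: "B = mat (m - s) b (\<lambda>(i,l). (ctrans Q * A * Pi) $$ (s + i, s + \<sigma> l))"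
    and d: "d = min (m - s) b"
    and run: "gb_run B d f Hs Rh"
    and c: "c = Max {i\<in>{1..d}. (cmod (Rh $$ (i-1, i-1)))\<^sup>2 \<ge> max \<delta> \<mu>}"
    and ph: "ph permutes {s..<s+t}" "\<forall>l<b. ph (s + l) = s + \<sigma> (f l)"
    and Qh: "Qh = blockdiag_id s (foldr (*) (take c Hs) (1\<^sub>m (m - s)))"
  shows "GB_form (s + c) (ctrans (Q * Qh) * A * (Pi * perm_mat n ph))"
proof -
  define r where "r = m - s"
  define R0 where "R0 = ctrans Q * A * Pi"
  define G where "G = ctrans (foldr (*) (take c Hs) (1\<^sub>m r))"
  have m: "m = s + r"
    using st k by (simp add: r_def)
  have Qc: "Q \<in> carrier_mat m m" and Pic: "Pi \<in> carrier_mat n n"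
    using Q Pi by (simp_all add: unitary_mat_def)
  have R0c: "R0 \<in> carrier_mat m n"
    unfolding R0_def by (rule mult_carrier_mat[OF mult_carrier_mat[OF ctrans_carrier_mat[OF Qc] A] Pic])
  have R0Pc: "R0 * perm_mat n ph \<in> carrier_mat (s + r) n"
    using mult_carrier_mat[OF R0c perm_mat_carrier] m by simp
  have Gu: "unitary_mat r G"
    using gb_run_unitary_prefix[OF run] by (simp add: G_def B r_def)
  have new: "ctrans (Q * Qh) * A * (Pi * perm_mat n ph) = blockdiag_id s G * (R0 * perm_mat n ph)"
    using ctrans_mult_blockdiag_id_mult[OF Qc[unfolded m] _ A[unfolded m] Pic perm_mat_carrier] unitary_mat_ctrans[OF Gu]
    by (simp add: Qh G_def R0_def r_def unitary_mat_def)
  have tail: "\<forall>j\<in>{s + t..<n}. \<gamma> j \<le> \<mu>"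
  proof
    fix j assume j: "j \<in> {s + t..<n}"
    have "R0 = ctrans Q * (A * Pi)"
      unfolding R0_def using Qc A Pic by (simp add: assoc_mult_mat[of _ m m _ n _ n])
    then have "\<gamma> j \<le> (subcol_norm (A * Pi) 0 j)\<^sup>2"
      using gamma[folded R0_def] j subcol_norm_nonneg
        subcol_norm_unitary_mult_le[OF unitary_mat_ctrans[OF Q] mult_carrier_mat[OF A Pic], of j s]
      by (simp add: power_mono)
    also have "\<dots> \<le> \<mu>"
      unfolding mu using j by (intro Max_ge) auto
    finally show "\<gamma> j \<le> \<mu>" .
  qed
  have "GB_form s (blockdiag_id s G * (R0 * perm_mat n ph))"
    using permutes_subset[OF ph(1)] st
    by (intro GB_form_blockdiag_id_mult[OF GB_form_mult_perm_mat[OF GBs[folded R0_def] R0c] R0Pc Gu]) auto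
  moreover have "GB_form c (G * trailing_block s (R0 * perm_mat n ph))"
    using GB_form_trailing_candidate_update[OF R0c _ st(3) gamma[folded R0_def] tail maxgam b sigma delta
        B[folded R0_def] d run c ph] k st
    by (simp add: G_def r_def)
  then have "GB_form c (trailing_block s (blockdiag_id s G * (R0 * perm_mat n ph)))"
    using trailing_block_blockdiag_id_mult[OF _ R0Pc] Gu by (simp add: unitary_mat_def)
  ultimately show ?thesis
    unfolding new by (rule GB_form_append)
qed

end
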